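(* Let $2\le n\le m$. Let $u^0$ be the vertex of $Y_{n,m}$ with $u^0_i=1$ for all $1\le i\le m$ and $u^0_0\equiv-\lfloor (m-n)/2\rfloor\pmod n$, and let $d_0=d(u^0,0)$. Then (1) $d_0=\binom{\lfloor (m+n)/2\rfloor+1}{2}+\binom{\lceil (m-n)/2\rceil+1}{2}$; (2) if $2\nmid(m-n)$, let $u^1$ be the vertex with $u^1_i=0$ for $i=\lceil (m+1)/2\rceil$, $u^1_i=1$ for all other $1\le i\le m$, and $u^1_0\equiv-\lfloor (m-n)/2\rfloor\pmod n$; then $d(u^1,0)=d_0+n-\lceil (m+1)/2\rceil$.
   Context: The Yoke graph $Y_{n,m}$ has vertices the tuples $v=(v_0,\dots,v_{m+1})$ with $v_0,v_{m+1}\in\mathbb{Z}_n$, $v_1,\dots,v_m\in\{0,1\}$, $\sum v_i\equiv0\pmod n$ (so a vertex is determined by $v_0,\dots,v_m$); $u\sim v$ iff there is $0\le i\le m$ with $u_j=v_j$ for $j\notin\{i,i+1\}$ and either ($u_i=v_i+1$, $u_{i+1}=v_{i+1}-1$) or ($u_i=v_i-1$, $u_{i+1}=v_{i+1}+1$), buckets mod $n$. $0$ is the all-zero vertex and $d$ is graph distance. *)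

theory Defs
  imports Main
begin

text \<open>A vertex of the Yoke graph Y_{n,m} is encoded as a function v :: nat => int,
  where v 0 and v (m+1) are canonical representatives in {0..n-1} of Z_n,
  v 1, ..., v m are in {0,1}, v i = 0 for i > m+1, and the total sum is 0 mod n.\<close>

definition yoke_vert :: "nat \<Rightarrow> nat \<Rightarrow> (nat \<Rightarrow> int) \<Rightarrow> bool" where
  "yoke_vert n m v \<longleftrightarrow>
     0 \<le> v 0 \<and> v 0 < int n \<and> 0 \<le> v (Suc m) \<and> v (Suc m) < int n \<and>
     (\<forall>i. 1 \<le> i \<and> i \<le> m \<longrightarrow> v i \<in> {0, 1}) \<and>
     (\<forall>i. i > Suc m \<longrightarrow> v i = 0) \<and>
     (\<Sum>i\<le>Suc m. v i) mod int n = 0"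

definition yoke_eq :: "nat \<Rightarrow> nat \<Rightarrow> nat \<Rightarrow> int \<Rightarrow> int \<Rightarrow> bool" where
  "yoke_eq n m k a b \<longleftrightarrow> (if k = 0 \<or> k = Suc m then a mod int n = b mod int n else a = b)"

definition yoke_adj :: "nat \<Rightarrow> nat \<Rightarrow> (nat \<Rightarrow> int) \<Rightarrow> (nat \<Rightarrow> int) \<Rightarrow> bool" where
  "yoke_adj n m u v \<longleftrightarrow> yoke_vert n m u \<and> yoke_vert n m v \<and>
     (\<exists>i\<le>m. (\<forall>j\<le>Suc m. j \<noteq> i \<and> j \<noteq> Suc i \<longrightarrow> u j = v j) \<and>
        ((yoke_eq n m i (u i) (v i + 1) \<and> yoke_eq n m (Suc i) (u (Suc i)) (v (Suc i) - 1)) \<or>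
         (yoke_eq n m i (u i) (v i - 1) \<and> yoke_eq n m (Suc i) (u (Suc i)) (v (Suc i) + 1))))"

definition yoke_edges :: "nat \<Rightarrow> nat \<Rightarrow> ((nat \<Rightarrow> int) \<times> (nat \<Rightarrow> int)) set" where
  "yoke_edges n m = {(u, v). yoke_adj n m u v}"

definition yoke_dist :: "nat \<Rightarrow> nat \<Rightarrow> (nat \<Rightarrow> int) \<Rightarrow> (nat \<Rightarrow> int) \<Rightarrow> nat" where
  "yoke_dist n m u v = (LEAST k. (u, v) \<in> yoke_edges n m ^^ k)"

text \<open>The vertex determined by v_0, ..., v_m (given by f); v_{m+1} is forced by the sum condition.\<close>
definition yoke_mk :: "nat \<Rightarrow> nat \<Rightarrow> (nat \<Rightarrow> int) \<Rightarrow> (nat \<Rightarrow> int)" where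
  "yoke_mk n m f = (\<lambda>i. if i \<le> m then f i
                         else if i = Suc m then (- (\<Sum>j\<le>m. f j)) mod int n else 0)"

definition yoke_zero :: "nat \<Rightarrow> int" where
  "yoke_zero = (\<lambda>_. 0)"

end

theory Submission
  imports Defs
begin

(* For an integer lift c of the bucket entry v_0, the number c + v_1 + ... + v_j is the net amount
   that has to be carried across the edge between positions j and j + 1 on the way from v to 0.
   An edge of Y_{n,m} changes exactly one of these m + 1 flows by one (an edge at bucket 0 also
   shifts the lift), and from every vertex other than 0 some edge lowers one nonzero flow towards 0.
   Hence d(v, 0) is the minimum over all lifts c of the potential sum_j |c + v_1 + ... + v_j|.
   For u^0 the flows are c, c + 1, ..., c + m, so d(u^0, 0) is the minimum of sum_{i<=m} |i - x| over
   a residue class of x modulo n; it is attained at x = floor((m + n)/2), the member of the class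
   within n/2 of the centre m/2. The flows of u^1 are c, ..., c + m - 1 together with c + p - 1, where
   p is the position of its hole, and the same choice of x minimizes both parts. *)

section \<open>Distance to 0 as a minimal flow potential\<close>

fun prefix_sum :: "(nat \<Rightarrow> int) \<Rightarrow> nat \<Rightarrow> int" where
  "prefix_sum u 0 = 0"
| "prefix_sum u (Suc j) = prefix_sum u j + u (Suc j)"

definition yoke_potential :: "nat \<Rightarrow> (nat \<Rightarrow> int) \<Rightarrow> int \<Rightarrow> int" where
  "yoke_potential m u c = (\<Sum>j\<le>m. \<bar>c + prefix_sum u j\<bar>)"

definition yoke_move :: "nat \<Rightarrow> nat \<Rightarrow> (nat \<Rightarrow> int) \<Rightarrow> nat \<Rightarrow> int \<Rightarrow> nat \<Rightarrow> int" where
  "yoke_move n m u i d =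
     (\<lambda>j. let v = u j - (if j = i then d else 0) + (if j = Suc i then d else 0)
          in if j = 0 \<or> j = Suc m then v mod int n else v)"

lemma prefix_sum_mono:
  assumes "i \<le> j" "\<And>k. i < k \<Longrightarrow> k \<le> j \<Longrightarrow> 0 \<le> u k"
  shows "prefix_sum u i \<le> prefix_sum u j"
  using assms by (induction j rule: dec_induct) (simp_all add: add_increasing2)

lemma prefix_sum_eq:
  assumes "i \<le> j" "\<And>k. i < k \<Longrightarrow> k \<le> j \<Longrightarrow> u k = 0"
  shows "prefix_sum u j = prefix_sum u i"
  using assms by (induction j rule: dec_induct) auto

lemma prefix_sum_yoke_move:
  "j \<le> m \<Longrightarrow> prefix_sum (yoke_move n m u i d) j
     = prefix_sum u j + (if i = 0 then d else 0) - (if j = i then d else 0)"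
  by (induction j) (auto simp: yoke_move_def)

lemma yoke_move_0_mod:
  "yoke_move n m u i d 0 mod int n = (u 0 - (if i = 0 then d else 0)) mod int n"
  by (simp add: yoke_move_def)

lemma yoke_potential_move:
  assumes "i \<le> m"
  shows "yoke_potential m (yoke_move n m u i d) (c - (if i = 0 then d else 0))
    = yoke_potential m u c - \<bar>c + prefix_sum u i\<bar> + \<bar>c + prefix_sum u i - d\<bar>"
proof -
  have "yoke_potential m (yoke_move n m u i d) (c - (if i = 0 then d else 0))
      = (\<Sum>j\<le>m. \<bar>c + prefix_sum u j\<bar> +
           (if j = i then \<bar>c + prefix_sum u i - d\<bar> - \<bar>c + prefix_sum u i\<bar> else 0))"
    unfolding yoke_potential_def by (rule sum.cong) (auto simp: prefix_sum_yoke_move)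
  also have "\<dots> = yoke_potential m u c - \<bar>c + prefix_sum u i\<bar> + \<bar>c + prefix_sum u i - d\<bar>"
    using assms by (simp add: sum.distrib yoke_potential_def)
  finally show ?thesis .
qed

lemma yoke_vert_pos: "yoke_vert n m u \<Longrightarrow> 0 < n"
  by (simp add: yoke_vert_def)

lemma yoke_eq_shift: "yoke_eq n m k a (b + d) \<longleftrightarrow> yoke_eq n m k b (a - d)"
  unfolding yoke_eq_def mod_eq_dvd_iff by (auto simp: dvd_diff_commute algebra_simps)

lemma yoke_adj_imp_move:
  assumes "yoke_adj n m u w"
  shows "\<exists>i\<le>m. \<exists>d. \<bar>d\<bar> = 1 \<and> w = yoke_move n m u i d"
proof -
  from assms obtain i where "i \<le> m"
    and other: "\<forall>j\<le>Suc m. j \<noteq> i \<and> j \<noteq> Suc i \<longrightarrow> u j = w j"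
    and dis: "(yoke_eq n m i (u i) (w i + 1) \<and> yoke_eq n m (Suc i) (u (Suc i)) (w (Suc i) - 1)) \<or>
         (yoke_eq n m i (u i) (w i - 1) \<and> yoke_eq n m (Suc i) (u (Suc i)) (w (Suc i) + 1))"
    unfolding yoke_adj_def by blast
  have u: "yoke_vert n m u" and w: "yoke_vert n m w" using assms by (simp_all add: yoke_adj_def)
  obtain d :: int where d: "\<bar>d\<bar> = 1"
    and di: "yoke_eq n m i (w i) (u i - d)" and dSuc: "yoke_eq n m (Suc i) (w (Suc i)) (u (Suc i) + d)"
    using dis yoke_eq_shift by (metis abs_neg_one abs_one diff_minus_eq_add)
  have bucket: "v 0 mod int n = v 0" "v (Suc m) mod int n = v (Suc m)" if "yoke_vert n m v" for v
    using that by (auto simp: yoke_vert_def)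
  have "w j = yoke_move n m u i d j" for j
  proof (cases "j \<le> Suc m")
    case True
    then show ?thesis
      using other di dSuc bucket[OF u] bucket[OF w] \<open>i \<le> m\<close>
      by (auto simp: yoke_move_def yoke_eq_def Let_def)
  next
    case False
    then show ?thesis using u w \<open>i \<le> m\<close> by (simp add: yoke_move_def yoke_vert_def)
  qed
  then show ?thesis using \<open>i \<le> m\<close> d by blast
qed

lemma yoke_vert_move:
  assumes u: "yoke_vert n m u" and "i \<le> m"
    and "1 \<le> i \<Longrightarrow> u i - d \<in> {0, 1}" and "Suc i \<le> m \<Longrightarrow> u (Suc i) + d \<in> {0, 1}"
  shows "yoke_vert n m (yoke_move n m u i d)"
proof -
  define w where "w = yoke_move n m u i d"
  define v where "v j = u j - (if j = i then d else 0) + (if j = Suc i then d else 0)" for j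
  have w_mod: "w j mod int n = v j mod int n" for j
    by (simp add: w_def v_def yoke_move_def Let_def)
  have "(\<Sum>j\<le>Suc m. v j) = (\<Sum>j\<le>Suc m. u j)"
    using \<open>i \<le> m\<close> by (simp add: v_def sum.distrib sum_subtractf del: sum.atMost_Suc)
  then have "(\<Sum>j\<le>Suc m. w j) mod int n = (\<Sum>j\<le>Suc m. u j) mod int n"
    by (metis (no_types, lifting) mod_sum_eq sum.cong w_mod)
  then show ?thesis
    using assms yoke_vert_pos[OF u] unfolding yoke_vert_def w_def
    by (auto simp: yoke_move_def)
qed

lemma yoke_adj_move:
  assumes u: "yoke_vert n m u" and "i \<le> m" and "\<bar>d\<bar> = 1"
    and "1 \<le> i \<Longrightarrow> u i - d \<in> {0, 1}" and "Suc i \<le> m \<Longrightarrow> u (Suc i) + d \<in> {0, 1}"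
  shows "yoke_adj n m u (yoke_move n m u i d)"
proof -
  have "u 0 mod int n = u 0" "u (Suc m) mod int n = u (Suc m)"
    using u by (auto simp: yoke_vert_def)
  moreover have "d = 1 \<or> d = -1" using \<open>\<bar>d\<bar> = 1\<close> by linarith
  ultimately show ?thesis
    using yoke_vert_move[OF assms(1,2,4,5)] u \<open>i \<le> m\<close>
    unfolding yoke_adj_def
    by (intro conjI exI[of _ i]) (auto simp: yoke_move_def yoke_eq_def Let_def mod_simps)
qed

lemma prefix_sum_zero [simp]: "prefix_sum (\<lambda>_. 0) j = 0"
  by (induction j) simp_all

lemma yoke_potential_le_walk_length:
  assumes "(u, yoke_zero) \<in> yoke_edges n m ^^ k"
  shows "\<exists>c. c mod int n = u 0 mod int n \<and> yoke_potential m u c \<le> int k"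
  using assms
proof (induction k arbitrary: u)
  case 0
  then show ?case by (intro exI[of _ 0]) (simp add: yoke_potential_def yoke_zero_def)
next
  case (Suc k)
  then obtain w where "(u, w) \<in> yoke_edges n m" and walk: "(w, yoke_zero) \<in> yoke_edges n m ^^ k"
    using relpow_Suc_D2 by metis
  then have "yoke_adj n m u w" by (simp add: yoke_edges_def)
  obtain c' where c': "c' mod int n = w 0 mod int n" "yoke_potential m w c' \<le> int k"
    using Suc.IH[OF walk] by blast
  obtain i d where "i \<le> m" "\<bar>d\<bar> = 1" and w: "w = yoke_move n m u i d"
    using yoke_adj_imp_move[OF \<open>yoke_adj n m u w\<close>] by blast
  define c where "c = c' + (if i = 0 then d else 0)"
  have "(c - (if i = 0 then d else 0)) mod int n = (u 0 - (if i = 0 then d else 0)) mod int n"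
    using c' yoke_move_0_mod[of n m u i d] by (simp add: c_def w)
  then have "c mod int n = u 0 mod int n"
    by (simp add: mod_eq_dvd_iff)
  moreover have "yoke_potential m u c \<le> yoke_potential m w c' + 1"
    using yoke_potential_move[OF \<open>i \<le> m\<close>, of n u d c] \<open>\<bar>d\<bar> = 1\<close>
    by (simp add: c_def w)
  ultimately show ?case using c' by force
qed

lemma yoke_vert_binary: "yoke_vert n m u \<Longrightarrow> 1 \<le> k \<Longrightarrow> k \<le> m \<Longrightarrow> u k = 0 \<or> u k = 1"
  by (auto simp: yoke_vert_def)

lemma exists_descent_move:
  assumes u: "yoke_vert n m u" and "yoke_potential m u c \<noteq> 0"
  shows "\<exists>i\<le>m. \<exists>d. \<bar>d\<bar> = 1 \<and> (1 \<le> i \<longrightarrow> u i - d \<in> {0, 1}) \<and>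
           (Suc i \<le> m \<longrightarrow> u (Suc i) + d \<in> {0, 1}) \<and> 1 \<le> d * (c + prefix_sum u i)"
proof -
  note binary = yoke_vert_binary[OF u]
  consider "1 \<le> c + prefix_sum u m" | "c \<le> -1" | "0 \<le> c" "c + prefix_sum u m \<le> 0"
    by linarith
  then show ?thesis
  proof cases
    case 1
    \<comment> \<open>the last position holding a 1 (or 0): its flow is the positive flow at m\<close>
    define i where "i = (LEAST i. \<forall>k. i < k \<and> k \<le> m \<longrightarrow> u k = 0)"
    have "i \<le> m" unfolding i_def by (rule Least_le) simp
    have "\<forall>k. i < k \<and> k \<le> m \<longrightarrow> u k = 0"
      unfolding i_def by (rule LeastI[of _ m]) simp
    then have after: "u k = 0" if "i < k" "k \<le> m" for k
      using that by blast
    have "u i = 1" if "1 \<le> i"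
    proof -
      have "i - 1 < i" using that by simp
      then have "\<not> (\<forall>k. i - 1 < k \<and> k \<le> m \<longrightarrow> u k = 0)"
        unfolding i_def by (rule not_less_Least)
      then obtain k where "i - 1 < k" "k \<le> m" "u k \<noteq> 0" by blast
      then show ?thesis using after[of k] binary[of k] by (cases "k = i") auto
    qed
    moreover have "prefix_sum u m = prefix_sum u i"
      using prefix_sum_eq[OF \<open>i \<le> m\<close>] after by blast
    ultimately show ?thesis
      using 1 \<open>i \<le> m\<close> after[of "Suc i"] by (intro exI[of _ i] conjI exI[of _ 1]) auto
  next
    case 2
    \<comment> \<open>the position before the first 1 (or m): its flow is the negative flow c\<close>
    define i where "i = (LEAST i. i = m \<or> u (Suc i) \<noteq> 0)"
    have "i \<le> m" unfolding i_def by (rule Least_le) simp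
    have before: "u k = 0" if "0 < k" "k \<le> i" for k
      using not_less_Least[of "k - 1" "\<lambda>i. i = m \<or> u (Suc i) \<noteq> 0"] that
      unfolding i_def[symmetric] by simp
    have "u (Suc i) = 1" if "Suc i \<le> m"
      using LeastI[of "\<lambda>i. i = m \<or> u (Suc i) \<noteq> 0" m] binary[of "Suc i"] that
      unfolding i_def[symmetric] by auto
    moreover have "prefix_sum u i = 0"
      using prefix_sum_eq[of 0 i u] before by simp
    ultimately show ?thesis
      using 2 \<open>i \<le> m\<close> before[of i] by (intro exI[of _ i] conjI exI[of _ "-1"]) auto
  next
    case 3
    have nonneg: "0 \<le> u k" if "0 < k" "k \<le> m" for k
      using binary[of k] that by auto
    have "c + prefix_sum u j = 0" if "j \<le> m" for j
    proof -
      have "prefix_sum u 0 \<le> prefix_sum u j" "prefix_sum u j \<le> prefix_sum u m"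
        by (rule prefix_sum_mono; use nonneg that in simp)+
      then show ?thesis using 3 by simp
    qed
    then have "yoke_potential m u c = 0" by (simp add: yoke_potential_def)
    with assms show ?thesis by blast
  qed
qed

lemma yoke_potential_eq_0_imp_zero:
  assumes u: "yoke_vert n m u" and c: "c mod int n = u 0 mod int n" and "yoke_potential m u c = 0"
  shows "u = yoke_zero"
proof -
  have level: "c + prefix_sum u j = 0" if "j \<le> m" for j
    using assms(3) that unfolding yoke_potential_def by (subst (asm) sum_nonneg_eq_0_iff) auto
  then have "c = 0" by (metis le0 prefix_sum.simps(1) add.right_neutral)
  have inner: "u j = 0" if "1 \<le> j" "j \<le> m" for j
    using level[of j] level[of "j - 1"] that \<open>c = 0\<close> by (cases j) auto
  have "u 0 = 0" using u c \<open>c = 0\<close> by (simp add: yoke_vert_def)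
  moreover have "(\<Sum>j\<le>m. u j) = 0"
    using inner \<open>u 0 = 0\<close> by (intro sum.neutral) (metis atMost_iff less_one not_less)
  then have "u (Suc m) mod int n = 0" using u by (simp add: yoke_vert_def)
  then have "u (Suc m) = 0" using u by (auto simp: yoke_vert_def mod_pos_pos_trivial)
  ultimately show ?thesis
    using u inner unfolding yoke_zero_def yoke_vert_def
    by (metis le_neq_implies_less linorder_not_le not_less_eq_eq less_one)
qed

lemma walk_length_le_yoke_potential:
  assumes "yoke_vert n m u" "c mod int n = u 0 mod int n" "yoke_potential m u c = int N"
  shows "\<exists>k\<le>N. (u, yoke_zero) \<in> yoke_edges n m ^^ k"
  using assms
proof (induction N arbitrary: u c)
  case 0
  then show ?case using yoke_potential_eq_0_imp_zero by fastforce
next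
  case (Suc N)
  then obtain i d where "i \<le> m" "\<bar>d\<bar> = 1" and "1 \<le> i \<Longrightarrow> u i - d \<in> {0, 1}"
    and "Suc i \<le> m \<Longrightarrow> u (Suc i) + d \<in> {0, 1}" and descent: "1 \<le> d * (c + prefix_sum u i)"
    using exists_descent_move[of n m u c] by auto
  define w where "w = yoke_move n m u i d"
  have adj: "yoke_adj n m u w"
    unfolding w_def by (rule yoke_adj_move) fact+
  have "\<bar>c + prefix_sum u i - d\<bar> = \<bar>c + prefix_sum u i\<bar> - 1"
  proof -
    have "d = 1 \<or> d = -1" using \<open>\<bar>d\<bar> = 1\<close> by linarith
    then show ?thesis using descent by auto
  qed
  then have "yoke_potential m w (c - (if i = 0 then d else 0)) = int N"
    using yoke_potential_move[OF \<open>i \<le> m\<close>, of n u d c] Suc.prems(3) unfolding w_def by simp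
  moreover have "(c - (if i = 0 then d else 0)) mod int n = w 0 mod int n"
    unfolding w_def yoke_move_0_mod by (rule mod_diff_cong[OF Suc.prems(2) refl])
  moreover have "yoke_vert n m w" using adj by (simp add: yoke_adj_def)
  ultimately obtain k where "k \<le> N" "(w, yoke_zero) \<in> yoke_edges n m ^^ k"
    using Suc.IH by blast
  moreover have "(u, w) \<in> yoke_edges n m" using adj by (simp add: yoke_edges_def)
  ultimately show ?case by (meson Suc_le_mono relpow_Suc_I2)
qed

lemma yoke_potential_nonneg: "0 \<le> yoke_potential m u c"
  by (simp add: yoke_potential_def sum_nonneg)

lemma yoke_dist_eq_min_potential:
  assumes u: "yoke_vert n m u" and c0: "c0 mod int n = u 0 mod int n"
    and min: "\<And>c. c mod int n = u 0 mod int n \<Longrightarrow> yoke_potential m u c0 \<le> yoke_potential m u c"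
  shows "int (yoke_dist n m u yoke_zero) = yoke_potential m u c0"
proof (rule antisym)
  obtain k where "k \<le> nat (yoke_potential m u c0)" and walk: "(u, yoke_zero) \<in> yoke_edges n m ^^ k"
    using walk_length_le_yoke_potential[OF u c0] yoke_potential_nonneg by (metis int_nat_eq)
  then have "int k \<le> yoke_potential m u c0"
    by (simp add: le_nat_iff yoke_potential_nonneg)
  moreover have "yoke_dist n m u yoke_zero \<le> k"
    unfolding yoke_dist_def by (rule Least_le) (rule walk)
  ultimately show "int (yoke_dist n m u yoke_zero) \<le> yoke_potential m u c0" by linarith
next
  have "(u, yoke_zero) \<in> yoke_edges n m ^^ yoke_dist n m u yoke_zero"
    unfolding yoke_dist_def
    using walk_length_le_yoke_potential[OF u c0] yoke_potential_nonneg
    by (metis LeastI int_nat_eq)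
  then obtain c where "c mod int n = u 0 mod int n"
    and "yoke_potential m u c \<le> int (yoke_dist n m u yoke_zero)"
    using yoke_potential_le_walk_length by blast
  then show "yoke_potential m u c0 \<le> int (yoke_dist n m u yoke_zero)"
    using min by fastforce
qed

section \<open>Sums of absolute deviations\<close>

definition abs_dev_sum :: "nat \<Rightarrow> int \<Rightarrow> int" where
  "abs_dev_sum m x = (\<Sum>i\<le>m. \<bar>int i - x\<bar>)"

lemma abs_dev_sum_Suc: "abs_dev_sum (Suc m) x = abs_dev_sum m x + \<bar>int m + 1 - x\<bar>"
  by (simp add: abs_dev_sum_def)

lemma abs_dev_sum_closed_form:
  "0 \<le> x \<Longrightarrow> x \<le> int m \<Longrightarrow> 2 * abs_dev_sum m x = x * (x + 1) + (int m - x) * (int m - x + 1)"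
proof (induction m arbitrary: x)
  case 0
  then show ?case by (simp add: abs_dev_sum_def)
next
  case (Suc m)
  show ?case
  proof (cases "x \<le> int m")
    case True
    then show ?thesis using Suc by (simp add: abs_dev_sum_Suc algebra_simps)
  next
    case False
    then have "x = int m + 1" using Suc.prems by simp
    moreover have "abs_dev_sum (Suc m) (int m + 1) = abs_dev_sum m (int m) + int m + 1"
      unfolding abs_dev_sum_def by (subst sum.atMost_Suc_shift) simp
    ultimately show ?thesis using Suc.IH[of "int m"] by (simp add: algebra_simps)
  qed
qed

lemma abs_dev_sum_le_outside:
  assumes "0 \<le> b" "b \<le> int m" "x < 0 \<or> int m < x"
  shows "abs_dev_sum m b \<le> abs_dev_sum m x"
proof -
  have "2 * abs_dev_sum m 0 - 2 * abs_dev_sum m b = 2 * (b * (int m - b))"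
    using assms abs_dev_sum_closed_form[of b m] abs_dev_sum_closed_form[of 0 m]
    by (simp add: algebra_simps)
  moreover have "0 \<le> b * (int m - b)" using assms(1,2) by simp
  moreover have "abs_dev_sum m 0 = abs_dev_sum m (int m)"
    using abs_dev_sum_closed_form[of 0 m] abs_dev_sum_closed_form[of "int m" m] by simp
  moreover have "abs_dev_sum m 0 \<le> abs_dev_sum m x" if "x < 0"
    unfolding abs_dev_sum_def by (rule sum_mono) (use that in auto)
  moreover have "abs_dev_sum m (int m) \<le> abs_dev_sum m x" if "int m < x"
    unfolding abs_dev_sum_def by (rule sum_mono) (use that in auto)
  ultimately show ?thesis using assms(3) by linarith
qed

lemma mod_eq_imp_eq_or_abs_diff_ge:
  assumes "x mod int n = y mod int n"
  shows "x = y \<or> int n \<le> \<bar>x - y\<bar>"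
proof -
  have "int n dvd x - y" using assms by (simp add: mod_eq_dvd_iff)
  then show ?thesis using dvd_imp_le_int[of "x - y" "int n"] by auto
qed

lemma abs_dev_sum_residue_min:
  assumes "0 \<le> b" "b \<le> int m" "\<bar>2 * b - int m\<bar> \<le> int n" "x mod int n = b mod int n"
  shows "abs_dev_sum m b \<le> abs_dev_sum m x"
proof (cases "x < 0 \<or> int m < x")
  case True
  then show ?thesis using abs_dev_sum_le_outside assms(1,2) by blast
next
  case False
  have "0 \<le> (x - b) * (x + b - int m)"
  proof -
    consider "x = b" | "int n \<le> x - b" | "x - b \<le> - int n"
      using mod_eq_imp_eq_or_abs_diff_ge[OF assms(4)] by linarith
    then show ?thesis
      by cases (use assms(3) in \<open>auto intro: mult_nonneg_nonneg mult_nonpos_nonpos\<close>)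
  qed
  moreover have "2 * abs_dev_sum m x - 2 * abs_dev_sum m b = 2 * ((x - b) * (x + b - int m))"
    using False assms(1,2) abs_dev_sum_closed_form[of x m] abs_dev_sum_closed_form[of b m]
    by (simp add: algebra_simps)
  ultimately show ?thesis by linarith
qed

lemma abs_diff_residue_min:
  assumes "\<bar>2 * q - 2 * b\<bar> \<le> int n" "x mod int n = b mod int n"
  shows "\<bar>q - b\<bar> \<le> \<bar>q - x\<bar>"
  using mod_eq_imp_eq_or_abs_diff_ge[OF assms(2)] assms(1) by auto

lemma abs_dev_sum_choose:
  assumes "b \<le> m"
  shows "abs_dev_sum m (int b) = int ((b + 1 choose 2) + (m - b + 1 choose 2))"
proof -
  have choose: "2 * int (k + 1 choose 2) = int k * (int k + 1)" for k :: nat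
  proof -
    have "2 * (k + 1 choose 2) = k * (k + 1)" by (simp add: choose_two)
    then show ?thesis by (metis of_nat_1 of_nat_add of_nat_mult of_nat_numeral)
  qed
  have "2 * abs_dev_sum m (int b) = int b * (int b + 1) + int (m - b) * (int (m - b) + 1)"
    using abs_dev_sum_closed_form[of "int b" m] assms by simp
  then show ?thesis by (simp flip: choose)
qed

section \<open>The vertices with all binary entries 1 and with one hole\<close>

lemma yoke_vert_mk:
  assumes "0 \<le> f 0" "f 0 < int n" "\<And>i. 1 \<le> i \<Longrightarrow> i \<le> m \<Longrightarrow> f i \<in> {0, 1}"
  shows "yoke_vert n m (yoke_mk n m f)"
proof -
  have "(\<Sum>i\<le>Suc m. yoke_mk n m f i) = (\<Sum>i\<le>m. f i) + (- (\<Sum>i\<le>m. f i)) mod int n"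
    by (simp add: yoke_mk_def)
  then have "(\<Sum>i\<le>Suc m. yoke_mk n m f i) mod int n = 0"
    by (simp add: mod_add_right_eq)
  then show ?thesis using assms by (auto simp: yoke_vert_def yoke_mk_def)
qed

lemma prefix_sum_yoke_mk: "j \<le> m \<Longrightarrow> prefix_sum (yoke_mk n m f) j = prefix_sum f j"
  by (induction j) (auto simp: yoke_mk_def)

lemma sum_atMost_skip:
  fixes p M :: nat
  assumes "1 \<le> p" "p \<le> M"
  shows "(\<Sum>i\<le>M. h (if i < p then i else i - 1)) = (\<Sum>i<M. h i) + h (p - 1)"
  using assms(2)
proof (induction M rule: dec_induct)
  case base
  then show ?case using assms(1) by (cases p) (simp_all add: lessThan_Suc_atMost)
next
  case (step M)
  then show ?case by (simp add: ac_simps)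
qed

lemma yoke_potential_ones:
  "yoke_potential m (yoke_mk n m (\<lambda>i. if i = 0 then z else 1)) c = abs_dev_sum m (- c)"
proof -
  have "prefix_sum (\<lambda>i. if i = 0 then z else 1) j = int j" for j
    by (induction j) simp_all
  then show ?thesis
    unfolding yoke_potential_def abs_dev_sum_def
    by (intro sum.cong) (auto simp: prefix_sum_yoke_mk)
qed

lemma yoke_potential_hole:
  assumes "1 \<le> p" "p \<le> m"
  shows "yoke_potential m (yoke_mk n m (\<lambda>i. if i = 0 then z else if i = p then 0 else 1)) c
    = abs_dev_sum (m - 1) (- c) + \<bar>int p - 1 + c\<bar>"
proof -
  have "prefix_sum (\<lambda>i. if i = 0 then z else if i = p then 0 else 1) j
      = int (if j < p then j else j - 1)" for j
    using assms(1) by (induction j) auto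
  then have "yoke_potential m (yoke_mk n m (\<lambda>i. if i = 0 then z else if i = p then 0 else 1)) c
      = (\<Sum>j\<le>m. (\<lambda>k. \<bar>c + int k\<bar>) (if j < p then j else j - 1))"
    unfolding yoke_potential_def by (intro sum.cong) (auto simp: prefix_sum_yoke_mk)
  also have "\<dots> = (\<Sum>j<m. \<bar>c + int j\<bar>) + \<bar>c + int (p - 1)\<bar>"
    by (rule sum_atMost_skip[OF assms])
  also have "(\<Sum>j<m. \<bar>c + int j\<bar>) = abs_dev_sum (m - 1) (- c)"
    unfolding abs_dev_sum_def using assms
    by (intro sum.reindex_cong[of id]) (auto simp: add.commute)
  finally show ?thesis using assms(1) by (simp add: of_nat_diff add.commute)
qed

lemma mod_uminus_eq_swap: "c mod int n = (- x) mod int n \<Longrightarrow> (- c) mod int n = x mod int n"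
  by (metis mod_minus_eq minus_minus)

lemma yoke_dist_ones:
  assumes "0 \<le> z" "z < int n" "z mod int n = (- int b) mod int n"
    and "b \<le> m" "\<bar>2 * int b - int m\<bar> \<le> int n"
  shows "int (yoke_dist n m (yoke_mk n m (\<lambda>i. if i = 0 then z else 1)) yoke_zero)
    = abs_dev_sum m (int b)"
proof -
  let ?u = "yoke_mk n m (\<lambda>i. if i = 0 then z else 1)"
  have u: "yoke_vert n m ?u" by (rule yoke_vert_mk) (use assms in auto)
  have u0: "?u 0 = z" by (simp add: yoke_mk_def)
  have "int (yoke_dist n m ?u yoke_zero) = yoke_potential m ?u (- int b)"
  proof (rule yoke_dist_eq_min_potential[OF u])
    show "(- int b) mod int n = ?u 0 mod int n" using u0 assms(3) by simp
    fix c assume "c mod int n = ?u 0 mod int n"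
    then have "(- c) mod int n = int b mod int n" using u0 assms(3) mod_uminus_eq_swap by simp
    then show "yoke_potential m ?u (- int b) \<le> yoke_potential m ?u c"
      using abs_dev_sum_residue_min[of "int b" m n "- c"] assms(4,5)
      by (simp add: yoke_potential_ones)
  qed
  then show ?thesis by (simp add: yoke_potential_ones)
qed

lemma yoke_dist_hole:
  assumes "0 \<le> z" "z < int n" "z mod int n = (- int b) mod int n"
    and "1 \<le> p" "p \<le> m" "b < m" "\<bar>2 * int b - (int m - 1)\<bar> \<le> int n"
    and "\<bar>2 * (int p - 1) - 2 * int b\<bar> \<le> int n"
  shows "int (yoke_dist n m (yoke_mk n m (\<lambda>i. if i = 0 then z else if i = p then 0 else 1))
      yoke_zero) = abs_dev_sum (m - 1) (int b) + \<bar>int p - 1 - int b\<bar>"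
proof -
  let ?u = "yoke_mk n m (\<lambda>i. if i = 0 then z else if i = p then 0 else 1)"
  have u: "yoke_vert n m ?u" by (rule yoke_vert_mk) (use assms in auto)
  have u0: "?u 0 = z" by (simp add: yoke_mk_def)
  have "int (yoke_dist n m ?u yoke_zero) = yoke_potential m ?u (- int b)"
  proof (rule yoke_dist_eq_min_potential[OF u])
    show "(- int b) mod int n = ?u 0 mod int n" using u0 assms(3) by simp
    fix c assume "c mod int n = ?u 0 mod int n"
    then have "(- c) mod int n = int b mod int n" using u0 assms(3) mod_uminus_eq_swap by simp
    then have "abs_dev_sum (m - 1) (int b) \<le> abs_dev_sum (m - 1) (- c)"
      and "\<bar>int p - 1 - int b\<bar> \<le> \<bar>int p - 1 - (- c)\<bar>"
      using abs_dev_sum_residue_min[of "int b" "m - 1" n "- c"]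
        abs_diff_residue_min[of "int p - 1" "int b" n "- c"] assms(6-8) by simp_all
    then show "yoke_potential m ?u (- int b) \<le> yoke_potential m ?u c"
      using assms(4,5) by (simp add: yoke_potential_hole)
  qed
  then show ?thesis using assms(4,5) by (simp add: yoke_potential_hole)
qed

lemma yoke_dist_hole_odd:
  assumes "0 \<le> z" "z < int n" "z mod int n = (- int b) mod int n"
    and "1 \<le> n" "n \<le> m" "2 * b + 1 = m + n" "2 * p = m + 1 \<or> 2 * p = m + 2"
  shows "int (yoke_dist n m (yoke_mk n m (\<lambda>i. if i = 0 then z else if i = p then 0 else 1))
      yoke_zero) = abs_dev_sum m (int b) + int n - int p"
proof -
  have "int (yoke_dist n m (yoke_mk n m (\<lambda>i. if i = 0 then z else if i = p then 0 else 1))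
      yoke_zero) = abs_dev_sum (m - 1) (int b) + (int b + 1 - int p)"
    using yoke_dist_hole[OF assms(1-3), of p] assms(4-7) by auto
  moreover have "abs_dev_sum m (int b) = abs_dev_sum (m - 1) (int b) + (int m - int b)"
    using abs_dev_sum_Suc[of "m - 1" "int b"] assms(4-6) by (simp add: of_nat_diff)
  ultimately show ?thesis using assms(6) by linarith
qed

theorem lemma4p24:
  fixes n m :: nat
  assumes "2 \<le> n" and "n \<le> m"
  defines "u0 \<equiv> yoke_mk n m (\<lambda>i. if i = 0 then (- int ((m - n) div 2)) mod int n else 1)"
  defines "d0 \<equiv> yoke_dist n m u0 yoke_zero"
  shows "d0 = ((m + n) div 2 + 1 choose 2) + ((m - n + 1) div 2 + 1 choose 2) \<and>
         (odd (m - n) \<longrightarrow>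
           (let u1 = yoke_mk n m (\<lambda>i. if i = 0 then (- int ((m - n) div 2)) mod int n
                                      else if i = (m + 2) div 2 then 0 else 1)
            in int (yoke_dist n m u1 yoke_zero) = int d0 + int n - int ((m + 2) div 2)))"
proof -
  define b where "b = (m + n) div 2"
  define z where "z = (- int ((m - n) div 2)) mod int n"
  have "b = (m - n) div 2 + n" using assms(2) unfolding b_def by presburger
  then have z: "0 \<le> z" "z < int n" "z mod int n = (- int b) mod int n"
    using assms(1) unfolding z_def by (auto simp: mod_eq_dvd_iff)
  have b2: "2 * b = m + n \<or> 2 * b + 1 = m + n" unfolding b_def by presburger
  then have "b \<le> m" "\<bar>2 * int b - int m\<bar> \<le> int n" using assms by auto
  then have d0: "int d0 = abs_dev_sum m (int b)"
    unfolding d0_def u0_def z_def[symmetric] by (rule yoke_dist_ones[OF z])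
  moreover have "(m - n + 1) div 2 = m - b" using assms(2) unfolding b_def by presburger
  ultimately have "d0 = (b + 1 choose 2) + ((m - n + 1) div 2 + 1 choose 2)"
    using abs_dev_sum_choose[OF \<open>b \<le> m\<close>] by simp
  moreover have "int (yoke_dist n m (yoke_mk n m
      (\<lambda>i. if i = 0 then z else if i = (m + 2) div 2 then 0 else 1)) yoke_zero)
      = int d0 + int n - int ((m + 2) div 2)" if "odd (m - n)"
  proof -
    have "2 * b + 1 = m + n" using b2 that assms(2) by presburger
    moreover have "2 * ((m + 2) div 2) = m + 1 \<or> 2 * ((m + 2) div 2) = m + 2" by presburger
    ultimately show ?thesis using yoke_dist_hole_odd[OF z] d0 assms by simp
  qed
  ultimately show ?thesis unfolding b_def z_def Let_def by blast
qed

end
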